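(* Let $N\in\mathbb{C}^{m\times n}$ have rank $r$ and singular value decomposition $N=U\begin{pmatrix}\Sigma & 0\\ 0 & 0\end{pmatrix}V^{\ast}$, where $\Sigma\in\mathbb{C}^{r\times r}$ is diagonal with positive diagonal entries and $U\in\mathbb{C}^{m\times m}$, $V\in\mathbb{C}^{n\times n}$ are unitary. Let $X\in\mathbb{C}^{m\times m}$ be arbitrary. Suppose that one of the following conditions holds: (C1) $NN^{\ast}X$ is normal; (C2) there exist $0\neq c_{1}\in\mathbb{C}$ and $k_{1}\in\mathbb{N}^{+}$ such that $(NN^{\ast}X)^{k_{1}}=c_{1}NN^{\dagger}$; (C3) there exist $0\neq c_{2}\in\mathbb{C}$, $\ell\in\mathbb{N}^{+}$ and $k_{2}\in\mathbb{N}^{+}$ such that $(NN^{\ast}X)^{k_{2}}=c_{2}(NN^{\ast})^{\ell}$; (C4) $XE_{N}$ is normal; (C5) there exist $0\neq c_{3}\in\mathbb{C}$ and $k_{3}\in\mathbb{N}^{+}$ such that $(XE_{N})^{k_{3}}=c_{3}E_{N}$; (C6) $NN^{\dagger}XE_{N}=0$; (C7) there exists $k_{4}\in\mathbb{N}^{+}$ such that $(NN^{\ast})^{k_{4}}XE_{N}=0$. Then $X=U\begin{pmatrix}X_{1} & 0\\ X_{2} & X_{4}\end{pmatrix}U^{\ast}$ for some $X_{1}\in\mathbb{C}^{r\times r}$, $X_{2}\in\mathbb{C}^{(m-r)\times r}$, $X_{4}\in\mathbb{C}^{(m-r)\times(m-r)}$.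
   Context: $\mathbb{N}^{+}$ is the set of positive integers. For a complex matrix $A$, $A^{\ast}$ is its conjugate transpose, $A^{\dagger}$ its Moore--Penrose inverse, and $E_{A}:=I-AA^{\dagger}$. A square matrix $B$ is normal if $BB^{\ast}=B^{\ast}B$. *)

theory Defs
  imports "Jordan_Normal_Form.Schur_Decomposition" "Jordan_Normal_Form.DL_Rank"
begin

definition unitary_mat :: "nat \<Rightarrow> complex mat \<Rightarrow> bool" where
  "unitary_mat k U \<longleftrightarrow> U \<in> carrier_mat k k \<and>
     U * mat_adjoint U = 1\<^sub>m k \<and> mat_adjoint U * U = 1\<^sub>m k"

definition normal_mat :: "complex mat \<Rightarrow> bool" where
  "normal_mat B \<longleftrightarrow> dim_row B = dim_col B \<and> B * mat_adjoint B = mat_adjoint B * B"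

definition is_mp_inverse :: "complex mat \<Rightarrow> complex mat \<Rightarrow> bool" where
  "is_mp_inverse A B \<longleftrightarrow> B \<in> carrier_mat (dim_col A) (dim_row A) \<and>
     A * B * A = A \<and> B * A * B = B \<and>
     mat_adjoint (A * B) = A * B \<and> mat_adjoint (B * A) = B * A"

definition mp_inverse :: "complex mat \<Rightarrow> complex mat" where
  "mp_inverse A = (THE B. is_mp_inverse A B)"

definition E_mat :: "complex mat \<Rightarrow> complex mat" where
  "E_mat A = 1\<^sub>m (dim_row A) - A * mp_inverse A"

end

theory Submission
  imports Defs
begin

(* Put P = N N\<^sup>\<dagger>, E = I - P and M = N N\<^sup>*. By the SVD, P = U diag(I_r, 0) U\<^sup>*, so the
   claimed block shape of U\<^sup>* X U says exactly P X E = 0, and each condition forces this.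
   If A\<^sup>k = c Q with c \<noteq> 0, then A commutes with Q (C2, C3, C5); for a normal A,
   A C = 0 iff A\<^sup>* C = 0, because A C and A\<^sup>* C have the same Gram matrix (C1, C4);
   and a left factor M\<^sup>k can be cancelled since G\<^sup>k M\<^sup>k = P for G = (N\<^sup>\<dagger>)\<^sup>* N\<^sup>\<dagger> (C3, C7). *)

lemma mult_mat_assoc_dim:
  "dim_col A = dim_row B \<Longrightarrow> dim_col B = dim_row C \<Longrightarrow> A * B * C = A * (B * (C :: 'a :: semiring_0 mat))"
  by (rule assoc_mult_mat[of A "dim_row A" "dim_col A" B "dim_col B" C "dim_col C"]) auto

lemma mat_adjoint_dim [simp]:
  "dim_row (mat_adjoint A) = dim_col A" "dim_col (mat_adjoint A) = dim_row A"
  by (simp_all add: mat_adjoint_def)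

lemma mat_adjoint_index [simp]:
  "i < dim_col A \<Longrightarrow> j < dim_row A \<Longrightarrow> mat_adjoint (A :: complex mat) $$ (i,j) = cnj (A $$ (j,i))"
  by (simp add: mat_adjoint_def mat_of_rows_def)

lemma mat_adjoint_carrier [simp]: "A \<in> carrier_mat m n \<Longrightarrow> mat_adjoint A \<in> carrier_mat n m"
  by auto

lemma mat_adjoint_adjoint [simp]: "mat_adjoint (mat_adjoint (A :: complex mat)) = A"
  by (rule eq_matI) simp_all

lemma mat_adjoint_mult:
  "dim_col A = dim_row B \<Longrightarrow> mat_adjoint (A * B :: complex mat) = mat_adjoint B * mat_adjoint A"
  by (rule eq_matI) (auto simp: scalar_prod_def mult.commute intro!: sum.cong)

lemma mat_adjoint_minus:
  "A \<in> carrier_mat m n \<Longrightarrow> B \<in> carrier_mat m n \<Longrightarrow>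
   mat_adjoint (A - B :: complex mat) = mat_adjoint A - mat_adjoint B"
  by (rule eq_matI) auto

lemma mat_adjoint_zero [simp]: "mat_adjoint (0\<^sub>m m n :: complex mat) = 0\<^sub>m n m"
  by (rule eq_matI) auto

lemma mat_adjoint_mult_self_eq_0:
  assumes gram: "mat_adjoint A * A = 0\<^sub>m n n" and A: "A \<in> carrier_mat m n"
  shows "A = (0\<^sub>m m n :: complex mat)"
proof (rule eq_matI)
  fix i j assume "i < dim_row (0\<^sub>m m n :: complex mat)" "j < dim_col (0\<^sub>m m n :: complex mat)"
  hence i: "i < m" and j: "j < n" by auto
  have "complex_of_real (\<Sum>k<m. (cmod (A $$ (k,j)))\<^sup>2) = (\<Sum>k<m. A $$ (k,j) * cnj (A $$ (k,j)))"
    by (simp only: of_real_sum complex_norm_square)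
  also have "\<dots> = (mat_adjoint A * A) $$ (j,j)"
    using A j by (simp add: scalar_prod_def lessThan_atLeast0 mult.commute)
  also have "\<dots> = 0"
    using gram j by simp
  finally have "(\<Sum>k<m. (cmod (A $$ (k,j)))\<^sup>2) = 0"
    by (simp only: of_real_eq_0_iff)
  hence "A $$ (i,j) = 0" using i by (simp add: sum_nonneg_eq_0_iff)
  thus "A $$ (i,j) = 0\<^sub>m m n $$ (i,j)" using i j by simp
qed (use A in auto)

lemma normal_mat_mult_eq_0_iff:
  fixes A C :: "complex mat"
  assumes normal: "normal_mat A" and A: "A \<in> carrier_mat m m" and C: "C \<in> carrier_mat m k"
  shows "A * C = 0\<^sub>m m k \<longleftrightarrow> mat_adjoint A * C = 0\<^sub>m m k"
proof -
  have "mat_adjoint (mat_adjoint A * C) * (mat_adjoint A * C) = mat_adjoint C * (A * mat_adjoint A) * C"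
    using A C by (simp add: mat_adjoint_mult mult_mat_assoc_dim)
  also have "\<dots> = mat_adjoint C * (mat_adjoint A * A) * C"
    using normal unfolding normal_mat_def by simp
  also have "\<dots> = mat_adjoint (A * C) * (A * C)"
    using A C by (simp add: mat_adjoint_mult mult_mat_assoc_dim)
  finally have gram: "mat_adjoint (mat_adjoint A * C) * (mat_adjoint A * C) = mat_adjoint (A * C) * (A * C)" .
  show ?thesis
  proof
    assume "A * C = 0\<^sub>m m k"
    hence "mat_adjoint (mat_adjoint A * C) * (mat_adjoint A * C) = 0\<^sub>m k k"
      unfolding gram by simp
    thus "mat_adjoint A * C = 0\<^sub>m m k"
      by (rule mat_adjoint_mult_self_eq_0) (use A C in auto)
  next
    assume "mat_adjoint A * C = 0\<^sub>m m k"
    hence "mat_adjoint (A * C) * (A * C) = 0\<^sub>m k k"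
      unfolding gram[symmetric] by simp
    thus "A * C = 0\<^sub>m m k"
      by (rule mat_adjoint_mult_self_eq_0) (use A C in auto)
  qed
qed

lemma pow_mat_mult_commute:
  assumes A: "A \<in> carrier_mat n n"
  shows "A * A ^\<^sub>m k = A ^\<^sub>m k * A"
proof (induction k)
  case (Suc k)
  have "A * A ^\<^sub>m Suc k = (A * A ^\<^sub>m k) * A"
    using A by (simp add: assoc_mult_mat[of _ n n _ n _ n])
  also have "\<dots> = A ^\<^sub>m Suc k * A"
    using Suc by simp
  finally show ?case .
qed (use A in auto)

lemma smult_mat_cancel:
  fixes A B :: "'a :: field mat"
  assumes c: "c \<noteq> 0" and eq: "c \<cdot>\<^sub>m A = c \<cdot>\<^sub>m B"
  shows "A = B"
proof -
  have dims: "dim_row A = dim_row B" "dim_col A = dim_col B"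
    using arg_cong[OF eq, of dim_row] arg_cong[OF eq, of dim_col] by simp_all
  show ?thesis
  proof (rule eq_matI)
    fix i j assume ij: "i < dim_row B" "j < dim_col B"
    have "(c \<cdot>\<^sub>m A) $$ (i,j) = (c \<cdot>\<^sub>m B) $$ (i,j)"
      using eq by simp
    thus "A $$ (i,j) = B $$ (i,j)"
      using ij dims c by simp
  qed (use dims in auto)
qed

lemma commute_if_pow_mat_eq_smult:
  fixes A Q :: "'a :: field mat"
  assumes A: "A \<in> carrier_mat n n" and Q: "Q \<in> carrier_mat n n"
    and pow: "A ^\<^sub>m k = c \<cdot>\<^sub>m Q" and c: "c \<noteq> 0"
  shows "A * Q = Q * A"
proof (rule smult_mat_cancel[OF c])
  have "c \<cdot>\<^sub>m (A * Q) = A * A ^\<^sub>m k"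
    using A Q unfolding pow by (simp add: mult_smult_distrib)
  also have "\<dots> = A ^\<^sub>m k * A"
    by (rule pow_mat_mult_commute[OF A])
  also have "\<dots> = c \<cdot>\<^sub>m (Q * A)"
    using A Q unfolding pow by (simp add: mult_smult_assoc_mat)
  finally show "c \<cdot>\<^sub>m (A * Q) = c \<cdot>\<^sub>m (Q * A)" .
qed

(* Instantiated with P = N N\<^sup>\<dagger>, M = N N\<^sup>* and G = (N\<^sup>\<dagger>)\<^sup>* N\<^sup>\<dagger>; E is the paper's E_N. *)
locale range_projector =
  fixes m :: nat and P M G :: "complex mat"
  assumes P_carrier: "P \<in> carrier_mat m m"
    and M_carrier: "M \<in> carrier_mat m m"
    and G_carrier: "G \<in> carrier_mat m m"
    and P_idem: "P * P = P" and P_adjoint: "mat_adjoint P = P"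
    and P_M: "P * M = M" and M_P: "M * P = M" and G_M: "G * M = P"
begin

abbreviation E :: "complex mat" where "E \<equiv> 1\<^sub>m m - P"

lemma E_carrier: "E \<in> carrier_mat m m"
  using P_carrier by (simp add: minus_carrier_mat)

declare P_carrier [simp] M_carrier [simp] G_carrier [simp] E_carrier [simp]
  carrier_matD[OF P_carrier, simp] carrier_matD[OF M_carrier, simp] carrier_matD[OF G_carrier, simp]
  carrier_matD[OF E_carrier, simp] assoc_mult_mat[of _ m m _ m _ m, simp] mult_carrier_mat[of _ m m _ m, simp]

lemma P_E: "P * E = 0\<^sub>m m m"
  using P_idem by (subst mult_minus_distrib_mat[of _ m m]) auto

lemma E_P: "E * P = 0\<^sub>m m m"
  using P_idem by (subst minus_mult_distrib_mat[of _ m m]) auto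

lemma E_idem: "E * E = E"
  using P_E by (subst minus_mult_distrib_mat[of _ m m]) auto

lemma E_adjoint: "mat_adjoint E = E"
  using P_adjoint by (subst mat_adjoint_minus[of _ m m]) auto

lemma E_M: "E * M = 0\<^sub>m m m"
proof -
  have "E * M = (E * P) * M"
    using P_M by simp
  thus ?thesis
    using E_P by simp
qed

lemma M_pow_E: "0 < l \<Longrightarrow> M ^\<^sub>m l * E = 0\<^sub>m m m"
proof (induction l)
  case (Suc l)
  have "M ^\<^sub>m Suc l * E = M ^\<^sub>m l * ((M * P) * E)"
    using M_P by simp
  thus ?case
    using P_E by simp
qed simp

lemma P_M_pow: "0 < k \<Longrightarrow> P * M ^\<^sub>m k = M ^\<^sub>m k"
proof (induction k)
  case (Suc k)
  show ?case
  proof (cases "k = 0")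
    case False
    have "P * M ^\<^sub>m Suc k = (P * M ^\<^sub>m k) * M"
      by simp
    also have "\<dots> = M ^\<^sub>m Suc k"
      using Suc False by simp
    finally show ?thesis .
  qed (use P_M in simp)
qed simp

lemma G_pow_M_pow: "0 < k \<Longrightarrow> G ^\<^sub>m k * M ^\<^sub>m k = P"
proof (induction k)
  case (Suc k)
  show ?case
  proof (cases "k = 0")
    case True
    thus ?thesis using G_M by simp
  next
    case False
    have "G ^\<^sub>m Suc k * M ^\<^sub>m Suc k = G ^\<^sub>m k * (G * M) * M ^\<^sub>m k"
      using pow_mat_mult_commute[OF M_carrier, of k] by simp
    also have "\<dots> = G ^\<^sub>m k * M ^\<^sub>m k"
      using G_M P_M_pow False by simp
    finally show ?thesis
      using Suc False by simp
  qed
qed simp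

context
  fixes X :: "complex mat"
  assumes X: "X \<in> carrier_mat m m"
begin

declare X [simp] carrier_matD[OF X, simp]

lemma PXE_eq_0_if_M_pow:
  assumes k: "0 < k" and zero: "M ^\<^sub>m k * X * E = 0\<^sub>m m m"
  shows "P * X * E = 0\<^sub>m m m"
proof -
  have "P * X * E = G ^\<^sub>m k * M ^\<^sub>m k * X * E"
    by (simp only: G_pow_M_pow[OF k])
  also have "\<dots> = G ^\<^sub>m k * (M ^\<^sub>m k * X * E)"
    by simp
  finally show ?thesis
    using zero by simp
qed

lemma PXE_eq_0_if_MXE:
  assumes "M * X * E = 0\<^sub>m m m"
  shows "P * X * E = 0\<^sub>m m m"
  using PXE_eq_0_if_M_pow[of 1] assms by simp

lemma PXE_eq_0_if_normal_MX:
  assumes normal: "normal_mat (M * X)"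
  shows "P * X * E = 0\<^sub>m m m"
proof (rule PXE_eq_0_if_MXE)
  have "mat_adjoint (M * X) * E = mat_adjoint (E * M * X)"
    using E_adjoint by (simp add: mat_adjoint_mult)
  also have "\<dots> = 0\<^sub>m m m"
    using E_M by simp
  finally have "mat_adjoint (M * X) * E = 0\<^sub>m m m" .
  thus "M * X * E = 0\<^sub>m m m"
    using normal_mat_mult_eq_0_iff[OF normal, of m E m] by simp
qed

lemma PXE_eq_0_if_MX_pow_eq_smult_P:
  assumes c: "c \<noteq> 0" and pow: "(M * X) ^\<^sub>m k = c \<cdot>\<^sub>m P"
  shows "P * X * E = 0\<^sub>m m m"
proof (rule PXE_eq_0_if_MXE)
  have "M * X * P = P * (M * X)"
    using commute_if_pow_mat_eq_smult[OF _ P_carrier pow c] by simp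
  also have "\<dots> = M * X"
    using P_M by (simp flip: assoc_mult_mat[of P m m M m X m])
  finally have MXP: "M * X * P = M * X" .
  have "M * X * E = M * X * 1\<^sub>m m - M * X * P"
    by (rule mult_minus_distrib_mat[of _ m m _ m]) simp_all
  thus "M * X * E = 0\<^sub>m m m"
    unfolding MXP by simp
qed

lemma PXE_eq_0_if_MX_pow_eq_smult_M_pow:
  assumes c: "c \<noteq> 0" and l: "0 < l" and pow: "(M * X) ^\<^sub>m k = c \<cdot>\<^sub>m M ^\<^sub>m l"
  shows "P * X * E = 0\<^sub>m m m"
proof (rule PXE_eq_0_if_M_pow)
  have comm: "M * X * M ^\<^sub>m l = M ^\<^sub>m l * (M * X)"
    by (rule commute_if_pow_mat_eq_smult[where n = m, OF _ _ pow c]) simp_all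
  have "M ^\<^sub>m Suc l * X * E = M ^\<^sub>m l * (M * X) * E"
    by simp
  also have "\<dots> = M * X * M ^\<^sub>m l * E"
    by (simp only: comm)
  also have "\<dots> = M * X * (M ^\<^sub>m l * E)"
    by simp
  finally show "M ^\<^sub>m Suc l * X * E = 0\<^sub>m m m"
    using M_pow_E[OF l] by simp
qed simp

lemma PXE_eq_0_if_normal_XE:
  assumes normal: "normal_mat (X * E)"
  shows "P * X * E = 0\<^sub>m m m"
proof -
  have "X * E * P = 0\<^sub>m m m"
    using E_P by simp
  hence "mat_adjoint (X * E) * P = 0\<^sub>m m m"
    using normal_mat_mult_eq_0_iff[OF normal, of m P m] by simp
  hence "mat_adjoint (mat_adjoint (X * E) * P) = 0\<^sub>m m m"
    by simp
  thus ?thesis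
    using P_adjoint by (simp add: mat_adjoint_mult)
qed

lemma PXE_eq_0_if_XE_pow_eq_smult_E:
  assumes c: "c \<noteq> 0" and pow: "(X * E) ^\<^sub>m k = c \<cdot>\<^sub>m E"
  shows "P * X * E = 0\<^sub>m m m"
proof -
  have "E * (X * E) = X * E * E"
    using commute_if_pow_mat_eq_smult[OF _ E_carrier pow c] by simp
  also have "\<dots> = X * E"
    using E_idem by simp
  finally have "E * (X * E) = X * E" .
  hence "P * X * E = P * E * (X * E)"
    by simp
  thus ?thesis
    using P_E by simp
qed

end

end

lemma is_mp_inverseD:
  assumes "is_mp_inverse A B"
  shows "B \<in> carrier_mat (dim_col A) (dim_row A)" "A * B * A = A" "B * A * B = B"
    "mat_adjoint (A * B) = A * B" "mat_adjoint (B * A) = B * A"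
  using assms unfolding is_mp_inverse_def by simp_all

lemma is_mp_inverse_unique:
  assumes B: "is_mp_inverse A B" and C: "is_mp_inverse A C"
  shows "B = C"
proof -
  note B' = is_mp_inverseD[OF B] and C' = is_mp_inverseD[OF C]
  note dims [simp] = carrier_matD[OF B'(1)] carrier_matD[OF C'(1)] mult_mat_assoc_dim mat_adjoint_mult
  have A_adj_AC: "mat_adjoint A * (A * C) = mat_adjoint A"
    using arg_cong[OF C'(2), of mat_adjoint] C'(4) by simp
  have BA_A_adj: "B * (A * mat_adjoint A) = mat_adjoint A"
    using arg_cong[OF B'(2), of mat_adjoint] B'(5) by simp
  have "B = B * mat_adjoint (A * B)"
    using B'(3,4) by simp
  also have "\<dots> = B * mat_adjoint B * mat_adjoint A * (A * C)"
    using A_adj_AC by simp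
  also have "\<dots> = B * A * C"
    using B'(3,4) by (simp flip: mat_adjoint_mult)
  finally have B_eq: "B = B * A * C" .
  have "C = mat_adjoint (C * A) * C"
    using C'(3,5) by simp
  also have "\<dots> = B * A * mat_adjoint A * mat_adjoint C * C"
    using BA_A_adj by simp
  also have "\<dots> = B * A * C"
    using C'(3,5) by (simp flip: mat_adjoint_mult)
  finally show ?thesis
    using B_eq by simp
qed

lemma mp_inverse_eqI: "is_mp_inverse A B \<Longrightarrow> mp_inverse A = B"
  unfolding mp_inverse_def by (blast intro: the_equality is_mp_inverse_unique)

lemma range_projector_mp_inverse:
  assumes mp: "is_mp_inverse A B" and A: "A \<in> carrier_mat m n"
  shows "range_projector m (A * B) (A * mat_adjoint A) (mat_adjoint B * B)"
proof -
  note B = is_mp_inverseD[OF mp]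
  note dims [simp] = carrier_matD[OF A] carrier_matD[OF B(1)] mult_mat_assoc_dim mat_adjoint_mult
  have ABA: "A * (B * A) = A"
    using B(2) by simp
  have BA_A_adj: "B * (A * mat_adjoint A) = mat_adjoint A"
    using arg_cong[OF ABA, of mat_adjoint] B(5) by simp
  have PM: "A * B * (A * mat_adjoint A) = A * mat_adjoint A"
    using BA_A_adj by simp
  show ?thesis
  proof (unfold_locales)
    show "A * B * (A * B) = A * B"
      using B(3) by simp
    show "mat_adjoint (A * B) = A * B"
      by (rule B(4))
    show "A * B * (A * mat_adjoint A) = A * mat_adjoint A"
      by (rule PM)
    show "A * mat_adjoint A * (A * B) = A * mat_adjoint A"
      using arg_cong[OF PM, of mat_adjoint] B(4) by simp
    show "mat_adjoint B * B * (A * mat_adjoint A) = A * B"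
      using BA_A_adj B(4) by simp
  qed (auto intro!: carrier_matI)
qed

definition diag_rect_mat :: "nat \<Rightarrow> nat \<Rightarrow> (nat \<Rightarrow> complex) \<Rightarrow> complex mat" where
  "diag_rect_mat p q a = mat p q (\<lambda>(i,j). if i = j then a i else 0)"

lemma diag_rect_mat_carrier [simp]:
  "diag_rect_mat p q a \<in> carrier_mat p q"
  "dim_row (diag_rect_mat p q a) = p" "dim_col (diag_rect_mat p q a) = q"
  by (simp_all add: diag_rect_mat_def)

lemma diag_rect_mat_index:
  "i < p \<Longrightarrow> j < q \<Longrightarrow> diag_rect_mat p q a $$ (i,j) = (if i = j then a i else 0)"
  by (simp add: diag_rect_mat_def)

lemma diag_rect_mat_mult_index:
  assumes "i < p" "j < dim_col Y" "dim_row Y = q"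
  shows "(diag_rect_mat p q a * Y) $$ (i,j) = (if i < q then a i * Y $$ (i,j) else 0)"
proof -
  have "(diag_rect_mat p q a * Y) $$ (i,j) = (\<Sum>k = 0..<q. diag_rect_mat p q a $$ (i,k) * Y $$ (k,j))"
    using assms by (simp add: scalar_prod_def)
  also have "\<dots> = (\<Sum>k = 0..<q. if k = i then a i * Y $$ (i,j) else 0)"
    using assms by (intro sum.cong) (simp_all add: diag_rect_mat_index)
  finally show ?thesis
    by (simp add: sum.delta)
qed

lemma mult_diag_rect_mat_index:
  assumes "i < dim_row Y" "j < q" "dim_col Y = p"
  shows "(Y * diag_rect_mat p q a) $$ (i,j) = (if j < p then Y $$ (i,j) * a j else 0)"
proof -
  have "(Y * diag_rect_mat p q a) $$ (i,j) = (\<Sum>k = 0..<p. Y $$ (i,k) * diag_rect_mat p q a $$ (k,j))"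
    using assms by (simp add: scalar_prod_def)
  also have "\<dots> = (\<Sum>k = 0..<p. if k = j then Y $$ (i,j) * a j else 0)"
    using assms by (intro sum.cong) (simp_all add: diag_rect_mat_index)
  finally show ?thesis
    by (simp add: sum.delta)
qed

lemma diag_rect_mat_mult [simp]:
  "diag_rect_mat p q a * diag_rect_mat q s b = diag_rect_mat p s (\<lambda>i. if i < q then a i * b i else 0)"
proof (rule eq_matI)
  fix i j assume "i < dim_row (diag_rect_mat p s (\<lambda>i. if i < q then a i * b i else 0))"
    "j < dim_col (diag_rect_mat p s (\<lambda>i. if i < q then a i * b i else 0))"
  hence ij: "i < p" "j < s"
    by simp_all
  have "(diag_rect_mat p q a * diag_rect_mat q s b) $$ (i,j)
      = (if i < q then a i * diag_rect_mat q s b $$ (i,j) else 0)"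
    by (rule diag_rect_mat_mult_index) (simp_all add: ij)
  thus "(diag_rect_mat p q a * diag_rect_mat q s b) $$ (i,j)
      = diag_rect_mat p s (\<lambda>i. if i < q then a i * b i else 0) $$ (i,j)"
    using ij by (simp add: diag_rect_mat_index)
qed simp_all

lemma diag_rect_mat_mult_assoc [simp]:
  "dim_row Z = s \<Longrightarrow> diag_rect_mat p q a * (diag_rect_mat q s b * Z)
    = diag_rect_mat p s (\<lambda>i. if i < q then a i * b i else 0) * Z"
  by (simp flip: mult_mat_assoc_dim)

lemma mat_adjoint_diag_rect_mat [simp]:
  "mat_adjoint (diag_rect_mat p q a) = diag_rect_mat q p (\<lambda>i. cnj (a i))"
  by (rule eq_matI) (simp_all add: diag_rect_mat_index)

lemma unitary_matD:
  assumes "unitary_mat m U"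
  shows "U \<in> carrier_mat m m" "U * mat_adjoint U = 1\<^sub>m m" "mat_adjoint U * U = 1\<^sub>m m"
  using assms unfolding unitary_mat_def by simp_all

lemma unitary_mat_cancel:
  assumes U: "unitary_mat m U" and Z: "dim_row Z = m"
  shows "mat_adjoint U * (U * Z) = Z" "U * (mat_adjoint U * Z) = Z"
  using unitary_matD[OF U] Z by (simp_all flip: mult_mat_assoc_dim)

lemma mp_inverse_of_svd:
  fixes \<sigma> :: "nat \<Rightarrow> complex"
  assumes r: "r \<le> m" "r \<le> n" and \<sigma>: "\<forall>i<r. \<sigma> i \<noteq> 0"
    and U: "unitary_mat m U" and V: "unitary_mat n V"
    and N: "N = U * diag_rect_mat m n (\<lambda>i. if i < r then \<sigma> i else 0) * mat_adjoint V"
  obtains B where "is_mp_inverse N B"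
    and "N * B = U * diag_rect_mat m m (\<lambda>i. if i < r then 1 else 0) * mat_adjoint U"
proof
  define s where "s = (\<lambda>i. if i < r then \<sigma> i else 0)"
  define t where "t = (\<lambda>i. if i < r then inverse (\<sigma> i) else 0)"
  define d :: "nat \<Rightarrow> complex" where "d = (\<lambda>i. if i < r then 1 else 0)"
  define B where "B = V * diag_rect_mat n m t * mat_adjoint U"
  have [simp]:
    "(\<lambda>i. if i < n then s i * t i else 0) = d" "(\<lambda>i. if i < m then t i * s i else 0) = d"
    "(\<lambda>i. if i < m then d i * s i else 0) = s" "(\<lambda>i. if i < n then s i * d i else 0) = s"
    "(\<lambda>i. if i < n then d i * t i else 0) = t" "(\<lambda>i. if i < m then t i * d i else 0) = t"
    "(\<lambda>i. cnj (d i)) = d"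
    using r \<sigma> unfolding s_def t_def d_def by (auto intro!: ext)
  note [simp] = carrier_matD[OF unitary_matD(1)[OF U]] carrier_matD[OF unitary_matD(1)[OF V]]
    unitary_mat_cancel[OF U] unitary_mat_cancel[OF V] mult_mat_assoc_dim mat_adjoint_mult
  have N_s: "N = U * diag_rect_mat m n s * mat_adjoint V"
    using N unfolding s_def .
  have NB: "N * B = U * diag_rect_mat m m d * mat_adjoint U"
    unfolding N_s B_def by simp
  have BN: "B * N = V * diag_rect_mat n n d * mat_adjoint V"
    unfolding N_s B_def by simp
  show "N * B = U * diag_rect_mat m m (\<lambda>i. if i < r then 1 else 0) * mat_adjoint U"
    using NB unfolding d_def .
  show "is_mp_inverse N B"
    unfolding is_mp_inverse_def
  proof (intro conjI)
    show "B \<in> carrier_mat (dim_col N) (dim_row N)"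
      unfolding N_s B_def by (auto intro!: carrier_matI)
    show "N * B * N = N"
      unfolding NB by (simp add: N_s)
    show "B * N * B = B"
      unfolding BN by (simp add: B_def)
    show "mat_adjoint (N * B) = N * B"
      unfolding NB by simp
    show "mat_adjoint (B * N) = B * N"
      unfolding BN by simp
  qed
qed

lemma four_block_diagonal_eq_diag_rect_mat:
  assumes S: "S \<in> carrier_mat r r" "diagonal_mat S" and r: "r \<le> m" "r \<le> n"
  shows "four_block_mat S (0\<^sub>m r (n - r)) (0\<^sub>m (m - r) r) (0\<^sub>m (m - r) (n - r))
    = diag_rect_mat m n (\<lambda>i. if i < r then S $$ (i,i) else 0)"
  using assms by (intro eq_matI) (auto simp: diagonal_mat_def diag_rect_mat_index)

lemma split_block_upper_right_zero:
  assumes Y: "Y \<in> carrier_mat m m" and r: "r \<le> m"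
    and zero: "\<And>i j. i < r \<Longrightarrow> r \<le> j \<Longrightarrow> j < m \<Longrightarrow> Y $$ (i,j) = 0"
  obtains Y1 Y3 Y4 where "Y1 \<in> carrier_mat r r" "Y3 \<in> carrier_mat (m - r) r"
    "Y4 \<in> carrier_mat (m - r) (m - r)" "Y = four_block_mat Y1 (0\<^sub>m r (m - r)) Y3 Y4"
proof -
  obtain Y1 Y2 Y3 Y4 where split: "split_block Y r r = (Y1, Y2, Y3, Y4)"
    by (metis prod_cases4)
  have dims: "dim_row Y = r + (m - r)" "dim_col Y = r + (m - r)"
    using Y r by simp_all
  have "Y2 = mat r (m - r) (\<lambda>(i,j). Y $$ (i, j + r))"
    using split Y unfolding split_block_def Let_def by auto
  also have "\<dots> = 0\<^sub>m r (m - r)"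
    by (rule eq_matI) (simp_all add: zero)
  finally show ?thesis
    using that split_block[OF split dims] by simp
qed

lemma block_lower_triangular_if_compl_invariant:
  assumes U: "unitary_mat m U" and r: "r \<le> m" and X: "X \<in> carrier_mat m m"
    and P: "P = U * diag_rect_mat m m (\<lambda>i. if i < r then 1 else 0) * mat_adjoint U"
    and inv: "P * X * (1\<^sub>m m - P) = 0\<^sub>m m m"
  shows "\<exists>X1 X2 X4. X1 \<in> carrier_mat r r \<and> X2 \<in> carrier_mat (m - r) r \<and>
           X4 \<in> carrier_mat (m - r) (m - r) \<and>
           X = U * four_block_mat X1 (0\<^sub>m r (m - r)) X2 X4 * mat_adjoint U"
proof -
  define D where "D = diag_rect_mat m m (\<lambda>i. if i < r then 1 else 0)"
  define D' where "D' = diag_rect_mat m m (\<lambda>i. if i < r then 0 else 1)"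
  define Y where "Y = mat_adjoint U * X * U"
  note U' = unitary_matD[OF U]
  note [simp] = carrier_matD[OF U'(1)] carrier_matD[OF X] unitary_mat_cancel[OF U] mult_mat_assoc_dim
  have "D' = 1\<^sub>m m - D"
    unfolding D_def D'_def by (rule eq_matI) (simp_all add: diag_rect_mat_index)
  hence "U * D' * mat_adjoint U = (U * 1\<^sub>m m - U * D) * mat_adjoint U"
    using U'(1) by (simp only: mult_minus_distrib_mat[of U m m _ m] D_def one_carrier_mat diag_rect_mat_carrier)
  also have "\<dots> = U * mat_adjoint U - P"
    using U'(1) unfolding P D_def by (simp add: minus_mult_distrib_mat[of _ m m _ _ m])
  finally have compl: "1\<^sub>m m - P = U * D' * mat_adjoint U"
    using U'(2) by simp
  have Y_carrier: "Y \<in> carrier_mat m m"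
    unfolding Y_def by (auto intro!: carrier_matI)
  have "D * (Y * D') = mat_adjoint U * (P * X * (1\<^sub>m m - P)) * U"
    unfolding compl unfolding P D_def D'_def Y_def using U'(3) by simp
  hence DYD': "D * (Y * D') = 0\<^sub>m m m"
    using inv by simp
  have Y_zero: "Y $$ (i,j) = 0" if ij: "i < r" "r \<le> j" "j < m" for i j
  proof -
    have "(D * (Y * D')) $$ (i,j) = (Y * D') $$ (i,j)"
      unfolding D_def using ij r Y_carrier by (subst diag_rect_mat_mult_index) (auto simp: D'_def)
    also have "\<dots> = Y $$ (i,j)"
      unfolding D'_def using ij r Y_carrier by (subst mult_diag_rect_mat_index) auto
    finally show ?thesis
      using DYD' ij r by simp
  qed
  obtain Y1 Y3 Y4 where Ys: "Y1 \<in> carrier_mat r r" "Y3 \<in> carrier_mat (m - r) r"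
    "Y4 \<in> carrier_mat (m - r) (m - r)" "Y = four_block_mat Y1 (0\<^sub>m r (m - r)) Y3 Y4"
    by (rule split_block_upper_right_zero[OF Y_carrier r Y_zero])
  have "X = U * Y * mat_adjoint U"
    using U'(2) unfolding Y_def by simp
  thus ?thesis
    using Ys by blast
qed

lemma rank_le_dim_row:
  assumes A: "A \<in> carrier_mat m n"
  shows "vec_space.rank m (A :: 'a :: field mat) \<le> m"
proof -
  interpret vec_space "TYPE('a)" m .
  have "VectorSpace.subspace class_ring (span (set (cols A))) V"
    using span_is_subspace cols_dim A by (metis carrier_matD(1))
  thus ?thesis
    unfolding rank_def using subspace_dim[OF _ fin_dim fin_dim_span_cols[OF A]] dim_is_n by metis
qed

theorem lemma2p2:
  fixes N U V S X :: "complex mat" and m n r :: nat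
  assumes N: "N \<in> carrier_mat m n"
    and rk: "vec_space.rank m N = r"
    and S: "S \<in> carrier_mat r r" "diagonal_mat S"
    and Spos: "\<forall>i<r. S $$ (i,i) \<in> \<real> \<and> Re (S $$ (i,i)) > 0"
    and U: "unitary_mat m U" and V: "unitary_mat n V"
    and svd: "N = U * four_block_mat S (0\<^sub>m r (n - r)) (0\<^sub>m (m - r) r) (0\<^sub>m (m - r) (n - r))
                  * mat_adjoint V"
    and X: "X \<in> carrier_mat m m"
    and cond:
      "normal_mat (N * mat_adjoint N * X)
       \<or> (\<exists>c1 k1. c1 \<noteq> 0 \<and> k1 > 0 \<and>
            (N * mat_adjoint N * X) ^\<^sub>m k1 = c1 \<cdot>\<^sub>m (N * mp_inverse N))
       \<or> (\<exists>c2 l k2. c2 \<noteq> 0 \<and> l > 0 \<and> k2 > 0 \<and>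
            (N * mat_adjoint N * X) ^\<^sub>m k2 = c2 \<cdot>\<^sub>m ((N * mat_adjoint N) ^\<^sub>m l))
       \<or> normal_mat (X * E_mat N)
       \<or> (\<exists>c3 k3. c3 \<noteq> 0 \<and> k3 > 0 \<and> (X * E_mat N) ^\<^sub>m k3 = c3 \<cdot>\<^sub>m E_mat N)
       \<or> N * mp_inverse N * X * E_mat N = 0\<^sub>m m m
       \<or> (\<exists>k4. k4 > 0 \<and> (N * mat_adjoint N) ^\<^sub>m k4 * X * E_mat N = 0\<^sub>m m m)"
  shows "\<exists>X1 X2 X4. X1 \<in> carrier_mat r r \<and> X2 \<in> carrier_mat (m - r) r \<and>
           X4 \<in> carrier_mat (m - r) (m - r) \<and>
           X = U * four_block_mat X1 (0\<^sub>m r (m - r)) X2 X4 * mat_adjoint U"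
proof -
  have r: "r \<le> m" "r \<le> n"
    using rank_le_dim_row[OF N] vec_space.rank_le_nc[OF N] rk by simp_all
  have S_nonzero: "\<forall>i<r. S $$ (i,i) \<noteq> 0"
    using Spos by fastforce
  have svd': "N = U * diag_rect_mat m n (\<lambda>i. if i < r then S $$ (i,i) else 0) * mat_adjoint V"
    using svd four_block_diagonal_eq_diag_rect_mat[OF S r] by simp
  obtain B where mp: "is_mp_inverse N B"
    and NB: "N * B = U * diag_rect_mat m m (\<lambda>i. if i < r then 1 else 0) * mat_adjoint U"
    by (rule mp_inverse_of_svd[OF r S_nonzero U V svd'])
  interpret range_projector m "N * B" "N * mat_adjoint N" "mat_adjoint B * B"
    by (rule range_projector_mp_inverse[OF mp N])
  have "N * B * X * E = 0\<^sub>m m m"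
    using cond N unfolding E_mat_def mp_inverse_eqI[OF mp]
    by (elim disjE exE conjE; simp; blast intro: PXE_eq_0_if_normal_MX[OF X]
        PXE_eq_0_if_MX_pow_eq_smult_P[OF X] PXE_eq_0_if_MX_pow_eq_smult_M_pow[OF X]
        PXE_eq_0_if_normal_XE[OF X] PXE_eq_0_if_XE_pow_eq_smult_E[OF X] PXE_eq_0_if_M_pow[OF X])
  thus ?thesis
    by (rule block_lower_triangular_if_compl_invariant[OF U r(1) X NB])
qed

end
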